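(* Let $\lambda>0$, $\gamma>0$, and let $\beta_1=\beta_1(\gamma)$ be the unique positive solution of $\frac{\sqrt\pi}{2}\gamma x(1+x)^{1/2}(3+x)=1$. For $b\in[0,\beta_1)$ let $\varphi_b$ denote the unique solution, within the set $K$ of bounded analytic functions $h:[0,\lambda]\to\mathbb{R}$ with $0\le h\le 1$, of \begin{align*} &[(1+b\, y(\eta))y'(\eta)]'+2\eta y'(\eta)=0, \quad 0<\eta<\lambda,\\ &y'(0)+b\, y(0)y'(0)-\gamma y(0)=0,\\ &y(\lambda)=1. \end{align*} Let $0<b<\beta_1$. Then there exists $L>0$ such that for all $b_1,b_2\in[0,b]$, $$\|\varphi_{b_1}-\varphi_{b_2}\|_\infty\le L|b_1-b_2|,$$ where $\|\cdot\|_\infty$ is the supremum norm on $[0,\lambda]$.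
   Context: Existence and uniqueness of $\varphi_b$ in $K$ for every $b\in[0,\beta_1)$ is known (it is the unique fixed point of a contraction on $K$). *)

theory Defs
  imports "HOL-Analysis.Analysis"
begin

definition beta1 :: "real \<Rightarrow> real" where
  "beta1 \<gamma> = (THE x. x > 0 \<and> sqrt pi / 2 * \<gamma> * x * sqrt (1 + x) * (3 + x) = 1)"

definition real_analytic_on :: "(real \<Rightarrow> real) \<Rightarrow> real set \<Rightarrow> bool" where
  "real_analytic_on h S \<longleftrightarrow>
     (\<forall>x\<in>S. \<exists>r>0. \<exists>a::nat \<Rightarrow> real. \<forall>y\<in>S. \<bar>y - x\<bar> < r \<longrightarrow> (\<lambda>n. a n * (y - x) ^ n) sums h y)"

definition Kset :: "real \<Rightarrow> (real \<Rightarrow> real) set" where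
  "Kset lam = {h. real_analytic_on h {0..lam} \<and> bounded (h ` {0..lam})
                 \<and> (\<forall>x\<in>{0..lam}. 0 \<le> h x \<and> h x \<le> 1)}"

definition solves_bvp :: "real \<Rightarrow> real \<Rightarrow> real \<Rightarrow> (real \<Rightarrow> real) \<Rightarrow> bool" where
  "solves_bvp lam \<gamma> b y \<longleftrightarrow>
     (\<exists>y'. (\<forall>x\<in>{0..lam}. (y has_real_derivative y' x) (at x within {0..lam}))
        \<and> (\<forall>x\<in>{0<..<lam}. ((\<lambda>t. (1 + b * y t) * y' t) has_real_derivative (- 2 * x * y' x)) (at x))
        \<and> y' 0 + b * y 0 * y' 0 - \<gamma> * y 0 = 0
        \<and> y lam = 1)"

end

theory Submission
  imports Defs
begin

text \<open>Write \<open>w = (1 + c y) y'\<close> for the flux of a solution \<open>y\<close>. The equation says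
  \<open>w' = -2 x w / (1 + c y)\<close>, so \<open>w\<^sup>2\<close> decreases while \<open>w\<^sup>2 exp (2 x\<^sup>2)\<close> increases;
  with \<open>w(0) = \<gamma> y(0)\<close> and \<open>y(\<lambda>) = 1\<close> this gives \<open>0 < w \<le> \<gamma>\<close>.
  For two parameters \<open>c\<^sub>1, c\<^sub>2\<close>, comparing \<open>ln w\<^sub>1 - ln w\<^sub>2\<close> and the Kirchhoff transforms
  \<open>y + c y\<^sup>2/2\<close> up to the first crossing point of the two solutions bounds
  \<open>|y\<^sub>1(0) - y\<^sub>2(0)|\<close> by a multiple of \<open>|c\<^sub>1 - c\<^sub>2|\<close>. Gronwall's inequality applied to
  \<open>(y\<^sub>1 - y\<^sub>2)\<^sup>2 + (w\<^sub>1 - w\<^sub>2)\<^sup>2 + (c\<^sub>1 - c\<^sub>2)\<^sup>2\<close> then propagates this bound to all of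
  \<open>[0, \<lambda>]\<close>. The hypothesis \<open>b < \<beta>\<^sub>1\<close> is needed only for the existence of the
  solutions \<open>\<phi>\<^sub>c\<close>; the constants depend on \<open>b\<close> only through \<open>c \<le> b\<close>.\<close>

lemma le_of_deriv_nonneg:
  fixes f f' :: "real \<Rightarrow> real"
  assumes "a \<le> b" and "continuous_on {a..b} f"
    and "\<And>x. a < x \<Longrightarrow> x < b \<Longrightarrow> (f has_real_derivative f' x) (at x)"
    and "\<And>x. a < x \<Longrightarrow> x < b \<Longrightarrow> 0 \<le> f' x"
  shows "f a \<le> f b"
  by (rule DERIV_nonneg_imp_increasing_open[OF assms(1) _ assms(2)]) (use assms(3,4) in blast)

lemma abs_diff_le_of_deriv_bound:
  fixes f f' :: "real \<Rightarrow> real"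
  assumes "s \<le> t" and "continuous_on {s..t} f"
    and "\<And>x. s < x \<Longrightarrow> x < t \<Longrightarrow> (f has_real_derivative f' x) (at x)"
    and "\<And>x. s < x \<Longrightarrow> x < t \<Longrightarrow> \<bar>f' x\<bar> \<le> K"
  shows "\<bar>f t - f s\<bar> \<le> K * (t - s)"
proof (cases "s = t")
  case False
  with assms(1) have "s < t" by simp
  then obtain l z where z: "s < z" "z < t" and "(f has_real_derivative l) (at z)"
    and diff: "f t - f s = (t - s) * l"
    using MVT[OF _ assms(2)] assms(3) real_differentiable_def by meson
  then have "l = f' z" using assms(3) DERIV_unique by blast
  then show ?thesis
    using diff assms(4)[OF z] \<open>s < t\<close> by (simp add: abs_mult mult.commute mult_left_mono)
qed simp

lemma gronwall_le_exp:
  fixes f f' :: "real \<Rightarrow> real"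
  assumes "a \<le> t" and "continuous_on {a..t} f"
    and "\<And>x. a < x \<Longrightarrow> x < t \<Longrightarrow> (f has_real_derivative f' x) (at x)"
    and "\<And>x. a < x \<Longrightarrow> x < t \<Longrightarrow> f' x \<le> M * f x"
  shows "f t \<le> f a * exp (M * (t - a))"
proof -
  have "f t * exp (- (M * t)) \<le> f a * exp (- (M * a))"
  proof (rule DERIV_nonpos_imp_decreasing_open[OF assms(1)])
    fix x assume x: "a < x" "x < t"
    have "((\<lambda>x. f x * exp (- (M * x))) has_real_derivative (f' x - M * f x) * exp (- (M * x))) (at x)"
      by (rule derivative_eq_intros assms(3)[OF x] refl | simp add: algebra_simps)+
    moreover have "(f' x - M * f x) * exp (- (M * x)) \<le> 0"
      using assms(4)[OF x] by (simp add: mult_nonpos_nonneg)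
    ultimately show "\<exists>y. ((\<lambda>x. f x * exp (- (M * x))) has_real_derivative y) (at x) \<and> y \<le> 0"
      by blast
  qed (use assms(2) in \<open>intro continuous_intros\<close>)
  then have "f t * exp (- (M * t)) * exp (M * t) \<le> f a * exp (- (M * a)) * exp (M * t)"
    by (simp add: mult_right_mono)
  then show ?thesis by (simp add: mult.assoc flip: exp_add) (simp add: algebra_simps)
qed

lemma first_nonpos_point:
  fixes f :: "real \<Rightarrow> real"
  assumes "a \<le> b" and "continuous_on {a..b} f" and "f b \<le> 0"
  obtains T where "T \<in> {a..b}" and "f T \<le> 0" and "\<And>s. a \<le> s \<Longrightarrow> s < T \<Longrightarrow> 0 < f s"
proof -
  define Z where "Z = {a..b} \<inter> f -` {..0}"
  have "closed Z"
    unfolding Z_def by (intro continuous_closed_preimage assms(2)) auto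
  moreover have "b \<in> Z" "bdd_below Z"
    using assms unfolding Z_def by (auto intro: bdd_belowI[of _ a])
  ultimately have "Inf Z \<in> Z" using closed_contains_Inf by blast
  moreover have "0 < f s" if "a \<le> s" "s < Inf Z" for s
  proof (rule ccontr)
    assume "\<not> 0 < f s"
    with that \<open>Inf Z \<in> Z\<close> have "s \<in> Z" unfolding Z_def by auto
    then have "Inf Z \<le> s" using \<open>bdd_below Z\<close> by (rule cInf_lower)
    with that show False by simp
  qed
  ultimately show ?thesis using that unfolding Z_def by auto
qed

lemma divide_le_self:
  fixes a b :: real
  assumes "0 \<le> a" "1 \<le> b"
  shows "a / b \<le> a"
  using assms mult_left_mono[of 1 b a] by (simp add: divide_le_eq)

lemma reciprocal_diff_ge:
  fixes A B d :: real
  assumes "1 \<le> A" "1 \<le> B" "- d \<le> A - B" "0 \<le> d"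
  shows "- d \<le> 1 / B - 1 / A"
proof -
  have AB: "1 \<le> A * B" using assms mult_mono[of 1 A 1 B] by auto
  have eq: "1 / B - 1 / A = (A - B) / (A * B)" using assms by (simp add: field_simps)
  show ?thesis
  proof (cases "0 \<le> A - B")
    case True
    with AB have "0 \<le> (A - B) / (A * B)" by simp
    then show ?thesis unfolding eq using assms(4) by linarith
  next
    case False
    then have "A - B \<le> (A - B) / (A * B)"
      using AB by (simp add: le_divide_eq mult_left_mono_neg)
    then show ?thesis unfolding eq using assms by linarith
  qed
qed

lemma diff_le_mult_of_ln_diff_le:
  fixes u v a :: real
  assumes "0 < u" "0 < v" "ln v - ln u \<le> a"
  shows "v - u \<le> v * a"
proof -
  have "exp (ln v - a) \<le> exp (ln u)" using assms(3) by simp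
  then have "v * exp (- a) \<le> u" using assms(1,2) by (simp add: exp_diff exp_minus field_simps)
  moreover have "v * (1 - a) \<le> v * exp (- a)"
    using assms(2) exp_ge_add_one_self[of "- a"] by (intro mult_left_mono) auto
  ultimately show ?thesis by (simp add: algebra_simps)
qed

locale bvp_solution =
  fixes lam c g :: real and y y' :: "real \<Rightarrow> real"
  assumes lam_pos: "0 < lam" and c_nonneg: "0 \<le> c" and g_pos: "0 < g"
    and y_range: "\<And>x. x \<in> {0..lam} \<Longrightarrow> 0 \<le> y x \<and> y x \<le> 1"
    and y_deriv: "\<And>x. x \<in> {0..lam} \<Longrightarrow> (y has_real_derivative y' x) (at x within {0..lam})"
    and flux_deriv: "\<And>x. x \<in> {0<..<lam} \<Longrightarrow>
           ((\<lambda>t. (1 + c * y t) * y' t) has_real_derivative (- 2 * x * y' x)) (at x)"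
    and robin: "y' 0 + c * y 0 * y' 0 - g * y 0 = 0"
    and y_lam: "y lam = 1"
begin

definition flux :: "real \<Rightarrow> real" where
  "flux t = (1 + c * y t) * y' t"

lemma continuous_on_y: "continuous_on {0..lam} y"
  using y_deriv by (meson continuous_on_eq_continuous_within DERIV_continuous)

lemma y_has_deriv: "x \<in> {0<..<lam} \<Longrightarrow> (y has_real_derivative y' x) (at x)"
  using y_deriv[of x] at_within_interior[of x "{0..lam}"] by auto

lemma one_le_diffusivity: "x \<in> {0..lam} \<Longrightarrow> 1 \<le> 1 + c * y x"
  using y_range[of x] c_nonneg by simp

lemma y'_eq: "x \<in> {0..lam} \<Longrightarrow> y' x = flux x / (1 + c * y x)"
  using one_le_diffusivity[of x] by (simp add: flux_def)

lemma flux_has_deriv: "x \<in> {0<..<lam} \<Longrightarrow> (flux has_real_derivative - 2 * x * y' x) (at x)"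
  unfolding flux_def[abs_def] by (rule flux_deriv)

lemma flux_0: "flux 0 = g * y 0"
  using robin by (simp add: flux_def algebra_simps)

lemma continuous_on_flux_interior: "0 < s \<Longrightarrow> t < lam \<Longrightarrow> continuous_on {s..t} flux"
  by (intro continuous_at_imp_continuous_on ballI DERIV_isCont[OF flux_has_deriv]) auto

lemma flux_sq_has_deriv:
  assumes "x \<in> {0<..<lam}"
  shows "((\<lambda>t. (flux t)\<^sup>2) has_real_derivative - 4 * x * (flux x)\<^sup>2 / (1 + c * y x)) (at x)"
proof -
  have "((\<lambda>t. (flux t)\<^sup>2) has_real_derivative 2 * flux x * (- 2 * x * y' x)) (at x)"
    using flux_has_deriv[OF assms] by (auto intro!: derivative_eq_intros)
  moreover have "2 * flux x * (- 2 * x * y' x) = - 4 * x * (flux x)\<^sup>2 / (1 + c * y x)"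
    using y'_eq[of x] assms by (simp add: power2_eq_square)
  ultimately show ?thesis by simp
qed

lemma flux_sq_exp_mono:
  assumes "0 \<le> s" "s \<le> t" "t < lam" and cont: "continuous_on {s..t} flux"
  shows "(flux s)\<^sup>2 * exp (2 * s\<^sup>2) \<le> (flux t)\<^sup>2 * exp (2 * t\<^sup>2)"
proof (rule le_of_deriv_nonneg[OF assms(2)])
  show "continuous_on {s..t} (\<lambda>t. (flux t)\<^sup>2 * exp (2 * t\<^sup>2))"
    using cont by (intro continuous_intros)
  fix x assume x: "s < x" "x < t"
  then have xi: "x \<in> {0<..<lam}" using assms by auto
  show "((\<lambda>t. (flux t)\<^sup>2 * exp (2 * t\<^sup>2)) has_real_derivative
      exp (2 * x\<^sup>2) * (4 * x * (flux x)\<^sup>2 - 4 * x * (flux x)\<^sup>2 / (1 + c * y x))) (at x)"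
    by (rule derivative_eq_intros flux_sq_has_deriv[OF xi] refl | simp add: algebra_simps)+
  have "4 * x * (flux x)\<^sup>2 / (1 + c * y x) \<le> 4 * x * (flux x)\<^sup>2"
    using one_le_diffusivity[of x] xi by (intro divide_le_self) auto
  then show "0 \<le> exp (2 * x\<^sup>2) * (4 * x * (flux x)\<^sup>2 - 4 * x * (flux x)\<^sup>2 / (1 + c * y x))"
    by simp
qed

lemma flux_lipschitz_near_0:
  obtains K where "0 \<le> K"
    and "\<And>s t. 0 < s \<Longrightarrow> s \<le> t \<Longrightarrow> t \<le> lam / 2 \<Longrightarrow> \<bar>flux t - flux s\<bar> \<le> K * (t - s)"
proof -
  define B where "B = sqrt ((flux (lam / 2))\<^sup>2 * exp (2 * (lam / 2)\<^sup>2))"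
  have flux_le: "\<bar>flux t\<bar> \<le> B" if "0 < t" "t \<le> lam / 2" for t
  proof -
    have "(flux t)\<^sup>2 \<le> (flux t)\<^sup>2 * exp (2 * t\<^sup>2)"
      using mult_left_mono[of 1 "exp (2 * t\<^sup>2)" "(flux t)\<^sup>2"] by simp
    also have "\<dots> \<le> (flux (lam / 2))\<^sup>2 * exp (2 * (lam / 2)\<^sup>2)"
      using that lam_pos by (intro flux_sq_exp_mono continuous_on_flux_interior) auto
    finally show ?thesis unfolding B_def by (metis real_sqrt_abs real_sqrt_le_mono)
  qed
  have "\<bar>flux t - flux s\<bar> \<le> 2 * lam * B * (t - s)"
    if st: "0 < s" "s \<le> t" "t \<le> lam / 2" for s t
  proof (rule abs_diff_le_of_deriv_bound[OF st(2)])
    show "continuous_on {s..t} flux" using st lam_pos by (intro continuous_on_flux_interior) auto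
    fix x assume x: "s < x" "x < t"
    then have xi: "x \<in> {0<..<lam}" using st lam_pos by auto
    show "(flux has_real_derivative - 2 * x * y' x) (at x)"
      by (rule flux_has_deriv[OF xi])
    have "\<bar>- 2 * x * y' x\<bar> \<le> 2 * x * \<bar>flux x\<bar>"
      using one_le_diffusivity[of x] xi y'_eq[of x] by (simp add: abs_mult abs_div divide_le_self)
    also have "\<dots> \<le> 2 * lam * B"
      using flux_le[of x] x st xi by (intro mult_mono) auto
    finally show "\<bar>- 2 * x * y' x\<bar> \<le> 2 * lam * B" .
  qed
  moreover have "0 \<le> 2 * lam * B" using lam_pos by (simp add: B_def)
  ultimately show ?thesis using that by blast
qed

lemma mean_value_points_tendsto_0:
  obtains \<xi> where "\<And>t. 0 < t \<Longrightarrow> t < lam \<Longrightarrow> 0 < \<xi> t \<and> \<xi> t < t \<and> y t - y 0 = t * y' (\<xi> t)"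
    and "filterlim \<xi> (at_right 0) (at_right 0)"
proof -
  have "\<exists>z. 0 < z \<and> z < t \<and> y t - y 0 = t * y' z" if t: "0 < t" "t < lam" for t
  proof -
    have "continuous_on {0..t} y" using t by (intro continuous_on_subset[OF continuous_on_y]) auto
    moreover have "y differentiable (at x)" if "0 < x" "x < t" for x
      using y_has_deriv[of x] that t real_differentiable_def by auto
    ultimately obtain l z where z: "0 < z" "z < t" and l: "(y has_real_derivative l) (at z)"
      and "y t - y 0 = (t - 0) * l"
      using MVT[OF t(1)] by blast
    moreover have "l = y' z" using DERIV_unique[OF l y_has_deriv] z t by auto
    ultimately show ?thesis by auto
  qed
  then obtain \<xi> where \<xi>: "\<And>t. 0 < t \<Longrightarrow> t < lam \<Longrightarrow> 0 < \<xi> t \<and> \<xi> t < t \<and> y t - y 0 = t * y' (\<xi> t)"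
    by metis
  have ev: "\<forall>\<^sub>F t in at_right 0. 0 < t \<and> t < lam"
    unfolding eventually_at_right_field using lam_pos by (intro exI[of _ lam]) auto
  have "(\<xi> \<longlongrightarrow> 0) (at_right 0)"
  proof (rule tendsto_sandwich[of "\<lambda>_. 0" \<xi> _ "\<lambda>t. t"])
    show "\<forall>\<^sub>F t in at_right 0. 0 \<le> \<xi> t" "\<forall>\<^sub>F t in at_right 0. \<xi> t \<le> t"
      using ev by (eventually_elim, use \<xi> in force)+
  qed auto
  moreover have "\<forall>\<^sub>F t in at_right 0. 0 < \<xi> t"
    using ev by eventually_elim (use \<xi> in force)
  ultimately have "filterlim \<xi> (at_right 0) (at_right 0)"
    unfolding filterlim_at by (auto elim: eventually_mono)
  with \<xi> show ?thesis by (rule that)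
qed

text \<open>With \<open>\<xi>\<^sub>t\<close> a mean value point of \<open>y\<close> on \<open>[0, t]\<close>, the difference quotient of \<open>y\<close> at \<open>0\<close>,
  weighted by \<open>1 + c y(\<xi>\<^sub>t)\<close>, is \<open>w(\<xi>\<^sub>t)\<close>; it tends to \<open>w(0)\<close> and differs from \<open>w(t)\<close> by
  at most \<open>K t\<close>.\<close>
lemma flux_tendsto_0: "(flux \<longlongrightarrow> flux 0) (at_right 0)"
proof -
  obtain K where "0 \<le> K"
    and K: "\<And>s t. 0 < s \<Longrightarrow> s \<le> t \<Longrightarrow> t \<le> lam / 2 \<Longrightarrow> \<bar>flux t - flux s\<bar> \<le> K * (t - s)"
    using flux_lipschitz_near_0 by blast
  obtain \<xi> where \<xi>: "\<And>t. 0 < t \<Longrightarrow> t < lam \<Longrightarrow> 0 < \<xi> t \<and> \<xi> t < t \<and> y t - y 0 = t * y' (\<xi> t)"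
    and lim_\<xi>: "filterlim \<xi> (at_right 0) (at_right 0)"
    using mean_value_points_tendsto_0 by blast
  have at_0: "at 0 within {0..lam} = at_right 0"
    using at_within_Icc_at_right[OF lam_pos] .
  have "(y \<longlongrightarrow> y 0) (at_right 0)"
    using continuous_on_y lam_pos unfolding continuous_on_eq_continuous_within continuous_within at_0[symmetric]
    by auto
  then have "((\<lambda>t. y (\<xi> t)) \<longlongrightarrow> y 0) (at_right 0)"
    using lim_\<xi> by (rule filterlim_compose)
  moreover have "((\<lambda>s. (y s - y 0) / s) \<longlongrightarrow> y' 0) (at_right 0)"
    using y_deriv[of 0] lam_pos unfolding has_field_derivative_iff at_0 by simp
  ultimately have quotient: "((\<lambda>t. (1 + c * y (\<xi> t)) * ((y t - y 0) / t)) \<longlongrightarrow> flux 0) (at_right 0)"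
    unfolding flux_def by (intro tendsto_intros)
  have ev: "\<forall>\<^sub>F t in at_right 0. 0 < t \<and> t < lam / 2"
    unfolding eventually_at_right_field using lam_pos by (intro exI[of _ "lam / 2"]) auto
  have "((\<lambda>t. flux t - (1 + c * y (\<xi> t)) * ((y t - y 0) / t)) \<longlongrightarrow> 0) (at_right 0)"
  proof (rule Lim_null_comparison)
    show "\<forall>\<^sub>F t in at_right 0. norm (flux t - (1 + c * y (\<xi> t)) * ((y t - y 0) / t)) \<le> K * t"
      using ev
    proof eventually_elim
      case (elim t)
      then have "0 < \<xi> t" "\<xi> t < t" "y t - y 0 = t * y' (\<xi> t)" using \<xi>[of t] by auto
      then have "(1 + c * y (\<xi> t)) * ((y t - y 0) / t) = flux (\<xi> t)" by (simp add: flux_def)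
      moreover have "K * (t - \<xi> t) \<le> K * t" using \<open>0 \<le> K\<close> \<open>0 < \<xi> t\<close> by (simp add: mult_left_mono)
      ultimately show ?case using K[of "\<xi> t" t] \<open>0 < \<xi> t\<close> \<open>\<xi> t < t\<close> elim by simp
    qed
    show "((\<lambda>t. K * t) \<longlongrightarrow> 0) (at_right 0)"
      by (auto intro!: tendsto_eq_intros)
  qed
  from tendsto_add[OF quotient this] show ?thesis by simp
qed

lemma continuous_on_flux:
  assumes "t < lam"
  shows "continuous_on {0..t} flux"
proof (cases "0 < t")
  case True
  have "continuous (at x within {0..t}) flux" if x: "x \<in> {0..t}" for x
  proof (cases "x = 0")
    case True
    then show ?thesis
      using flux_tendsto_0 at_within_Icc_at_right[OF \<open>0 < t\<close>] by (simp add: continuous_within)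
  next
    case False
    with x assms have "isCont flux x" by (intro DERIV_isCont[OF flux_has_deriv]) auto
    then show ?thesis by (rule continuous_at_imp_continuous_within)
  qed
  then show ?thesis by (simp add: continuous_on_eq_continuous_within)
next
  case False
  then have "{0..t} \<subseteq> {0}" by auto
  then show ?thesis using continuous_on_subset continuous_on_sing by blast
qed

lemma flux_sq_le_flux_0_sq:
  assumes "0 \<le> t" "t < lam"
  shows "(flux t)\<^sup>2 \<le> (flux 0)\<^sup>2"
proof -
  have "- (flux 0)\<^sup>2 \<le> - (flux t)\<^sup>2"
  proof (rule le_of_deriv_nonneg[OF assms(1)])
    show "continuous_on {0..t} (\<lambda>t. - (flux t)\<^sup>2)"
      using continuous_on_flux[OF assms(2)] by (intro continuous_intros)
    fix x assume "0 < x" "x < t"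
    then have xi: "x \<in> {0<..<lam}" using assms by auto
    show "((\<lambda>t. - (flux t)\<^sup>2) has_real_derivative 4 * x * (flux x)\<^sup>2 / (1 + c * y x)) (at x)"
      using DERIV_minus[OF flux_sq_has_deriv[OF xi]] by simp
    show "0 \<le> 4 * x * (flux x)\<^sup>2 / (1 + c * y x)"
      using xi one_le_diffusivity[of x] by simp
  qed
  then show ?thesis by simp
qed

lemma y_0_pos: "0 < y 0"
proof (rule ccontr)
  assume "\<not> 0 < y 0"
  then have y0: "y 0 = 0" using y_range[of 0] lam_pos by force
  have "y lam = y 0"
  proof (rule DERIV_isconst_end[OF lam_pos continuous_on_y])
    fix x assume x: "0 < x" "x < lam"
    then have "flux x = 0" using flux_sq_le_flux_0_sq[of x] flux_0 y0 by simp
    then show "(y has_real_derivative 0) (at x)" using y_has_deriv[of x] y'_eq[of x] x by simp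
  qed
  then show False using y_lam y0 by simp
qed

lemma flux_pos:
  assumes "0 \<le> t" "t < lam"
  shows "0 < flux t"
proof (rule ccontr)
  assume "\<not> 0 < flux t"
  moreover have "0 < flux 0" using flux_0 y_0_pos g_pos by simp
  ultimately have "\<exists>s. 0 \<le> s \<and> s \<le> t \<and> flux s = 0"
    using assms continuous_on_flux[OF assms(2)] by (intro IVT2'[of flux t 0 0]) auto
  then obtain s where s: "0 \<le> s" "s \<le> t" "flux s = 0" by blast
  then have "(flux 0)\<^sup>2 * exp (2 * 0\<^sup>2) \<le> 0"
    using flux_sq_exp_mono[of 0 s] continuous_on_flux[of s] assms by simp
  with \<open>0 < flux 0\<close> show False by simp
qed

lemma flux_le:
  assumes "0 \<le> t" "t < lam"
  shows "flux t \<le> g"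
proof -
  have "0 < flux 0" using flux_pos[of 0] lam_pos by simp
  then have "flux t \<le> flux 0"
    using power2_le_imp_le[OF flux_sq_le_flux_0_sq[OF assms]] by simp
  also have "\<dots> = g * y 0" by (rule flux_0)
  also have "\<dots> \<le> g" using y_range[of 0] lam_pos g_pos by (simp add: mult_left_le)
  finally show ?thesis .
qed

definition kirchhoff :: "real \<Rightarrow> real" where
  "kirchhoff t = y t + c * (y t)\<^sup>2 / 2"

lemma kirchhoff_has_deriv:
  assumes "x \<in> {0<..<lam}"
  shows "(kirchhoff has_real_derivative flux x) (at x)"
proof -
  have "((\<lambda>t. y t + c * (y t)\<^sup>2 / 2) has_real_derivative y' x + c * (2 * y x * y' x) / 2) (at x)"
    using y_has_deriv[OF assms] by (auto intro!: derivative_eq_intros)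
  then show ?thesis by (simp add: kirchhoff_def[abs_def] flux_def algebra_simps)
qed

lemma continuous_on_kirchhoff: "continuous_on {0..lam} kirchhoff"
  unfolding kirchhoff_def[abs_def] using continuous_on_y by (intro continuous_intros) auto

lemma ln_flux_has_deriv:
  assumes "x \<in> {0<..<lam}"
  shows "((\<lambda>t. ln (flux t)) has_real_derivative - 2 * x / (1 + c * y x)) (at x)"
proof -
  have pos: "0 < flux x" using flux_pos[of x] assms by auto
  have "((\<lambda>t. ln (flux t)) has_real_derivative inverse (flux x) * (- 2 * x * y' x)) (at x)"
    by (rule DERIV_chain2[OF DERIV_ln[OF pos] flux_has_deriv[OF assms]])
  moreover have "- 2 * x * y' x = - 2 * x / (1 + c * y x) * flux x"
    using assms one_le_diffusivity[of x] by (simp add: flux_def)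
  then have "inverse (flux x) * (- 2 * x * y' x) = - 2 * x / (1 + c * y x)"
    using pos by simp
  ultimately show ?thesis by simp
qed

lemma continuous_on_ln_flux: "t < lam \<Longrightarrow> continuous_on {0..t} (\<lambda>s. ln (flux s))"
  using flux_pos by (intro continuous_on_ln continuous_on_flux) (auto simp: less_imp_neq[symmetric])

end

lemma bvp_solutionI:
  assumes "0 < lam" "0 < g" "0 \<le> c" "h \<in> Kset lam" "solves_bvp lam g c h"
  obtains h' where "bvp_solution lam c g h h'"
proof -
  from assms(5) obtain h' where
    "\<forall>x\<in>{0..lam}. (h has_real_derivative h' x) (at x within {0..lam})"
    "\<forall>x\<in>{0<..<lam}. ((\<lambda>t. (1 + c * h t) * h' t) has_real_derivative (- 2 * x * h' x)) (at x)"
    "h' 0 + c * h 0 * h' 0 - g * h 0 = 0" "h lam = 1"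
    unfolding solves_bvp_def by blast
  then have "bvp_solution lam c g h h'"
    using assms(1-4) unfolding Kset_def by unfold_locales auto
  then show ?thesis by (rule that)
qed

locale bvp_solution_pair =
  s1: bvp_solution lam c1 g y1 y1' + s2: bvp_solution lam c2 g y2 y2'
  for lam c1 c2 g :: real and y1 y1' y2 y2' :: "real \<Rightarrow> real"
begin

lemma ln_flux_deriv_diff_ge:
  assumes x: "x \<in> {0<..<lam}" and "y2 x \<le> y1 x"
  shows "- (2 * lam * \<bar>c1 - c2\<bar>) \<le> - 2 * x / (1 + c1 * y1 x) - - 2 * x / (1 + c2 * y2 x)"
proof -
  define d where "d = \<bar>c1 - c2\<bar>"
  have "\<bar>(c1 - c2) * y2 x\<bar> \<le> d"
    using s2.y_range[of x] x by (simp add: d_def abs_mult mult_left_le)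
  moreover have "c1 * y2 x \<le> c1 * y1 x" using assms(2) s1.c_nonneg by (rule mult_left_mono)
  ultimately have "- d \<le> (1 + c1 * y1 x) - (1 + c2 * y2 x)" by (simp add: algebra_simps abs_le_iff)
  then have "- d \<le> 1 / (1 + c2 * y2 x) - 1 / (1 + c1 * y1 x)"
    using s1.one_le_diffusivity[of x] s2.one_le_diffusivity[of x] x
    by (intro reciprocal_diff_ge) (auto simp: d_def)
  then have "2 * x * (- d) \<le> 2 * x * (1 / (1 + c2 * y2 x) - 1 / (1 + c1 * y1 x))"
    using x by (intro mult_left_mono) auto
  moreover have "2 * x * d \<le> 2 * lam * d" using x by (intro mult_right_mono) (auto simp: d_def)
  ultimately show ?thesis by (simp add: d_def algebra_simps)
qed

lemma flux_diff_lower_bound: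
  assumes "y2 0 \<le> y1 0" and ordered: "\<And>x. 0 < x \<Longrightarrow> x < s \<Longrightarrow> y2 x \<le> y1 x"
    and s: "0 < s" "s < lam"
  shows "- (2 * lam\<^sup>2 * g * \<bar>c1 - c2\<bar>) \<le> s1.flux s - s2.flux s"
proof -
  define d where "d = \<bar>c1 - c2\<bar>"
  have "ln (s1.flux 0) - ln (s2.flux 0) + 2 * lam * d * 0
          \<le> ln (s1.flux s) - ln (s2.flux s) + 2 * lam * d * s"
  proof (rule le_of_deriv_nonneg[where f = "\<lambda>x. ln (s1.flux x) - ln (s2.flux x) + 2 * lam * d * x"])
    show "continuous_on {0..s} (\<lambda>x. ln (s1.flux x) - ln (s2.flux x) + 2 * lam * d * x)"
      using s by (intro continuous_intros s1.continuous_on_ln_flux s2.continuous_on_ln_flux)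
    fix x assume x: "0 < x" "x < s"
    then have xi: "x \<in> {0<..<lam}" using s by auto
    show "((\<lambda>x. ln (s1.flux x) - ln (s2.flux x) + 2 * lam * d * x) has_real_derivative
        - 2 * x / (1 + c1 * y1 x) - - 2 * x / (1 + c2 * y2 x) + 2 * lam * d * 1) (at x)"
      by (rule DERIV_add[OF DERIV_diff[OF s1.ln_flux_has_deriv[OF xi] s2.ln_flux_has_deriv[OF xi]]
            DERIV_cmult[OF DERIV_ident]])
    show "0 \<le> - 2 * x / (1 + c1 * y1 x) - - 2 * x / (1 + c2 * y2 x) + 2 * lam * d * 1"
      using ln_flux_deriv_diff_ge[OF xi ordered[OF x]] by (simp add: d_def)
  qed (use s in simp)
  moreover have "s2.flux 0 \<le> s1.flux 0"
    using assms(1) s1.g_pos by (simp add: s1.flux_0 s2.flux_0 mult_left_mono)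
  then have "ln (s2.flux 0) \<le> ln (s1.flux 0)"
    using s1.flux_pos[of 0] s2.flux_pos[of 0] s1.lam_pos by simp
  ultimately have "ln (s2.flux s) - ln (s1.flux s) \<le> 2 * lam * d * s" by simp
  then have "s2.flux s - s1.flux s \<le> s2.flux s * (2 * lam * d * s)"
    using s1.flux_pos s2.flux_pos s by (intro diff_le_mult_of_ln_diff_le) auto
  also have "\<dots> \<le> g * (2 * lam * d * lam)"
    using s2.flux_le[of s] s2.flux_pos[of s] s s1.lam_pos by (intro mult_mono) (auto simp: d_def)
  finally show ?thesis by (simp add: d_def algebra_simps power2_eq_square)
qed

lemma kirchhoff_diff_le:
  assumes "x \<in> {0..lam}" "y1 x \<le> y2 x"
  shows "s1.kirchhoff x - s2.kirchhoff x \<le> \<bar>c1 - c2\<bar> / 2"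
proof -
  have "c1 * (y1 x)\<^sup>2 \<le> c1 * (y2 x)\<^sup>2"
    using assms s1.y_range[of x] s1.c_nonneg by (intro mult_left_mono power_mono) auto
  moreover have "\<bar>(c1 - c2) * (y2 x)\<^sup>2\<bar> \<le> \<bar>c1 - c2\<bar>"
    using s2.y_range[OF assms(1)] power_le_one[of "y2 x" 2] by (simp add: abs_mult mult_left_le)
  ultimately show ?thesis
    using assms(2) unfolding s1.kirchhoff_def s2.kirchhoff_def by (simp add: abs_le_iff algebra_simps)
qed

lemma kirchhoff_diff_ge:
  assumes "x \<in> {0..lam}" "y2 x \<le> y1 x"
  shows "y1 x - y2 x - \<bar>c1 - c2\<bar> / 2 \<le> s1.kirchhoff x - s2.kirchhoff x"
proof -
  have "c1 * (y2 x)\<^sup>2 \<le> c1 * (y1 x)\<^sup>2"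
    using assms s2.y_range[of x] s1.c_nonneg by (intro mult_left_mono power_mono) auto
  moreover have "\<bar>(c1 - c2) * (y2 x)\<^sup>2\<bar> \<le> \<bar>c1 - c2\<bar>"
    using s2.y_range[OF assms(1)] power_le_one[of "y2 x" 2] by (simp add: abs_mult mult_left_le)
  ultimately show ?thesis
    unfolding s1.kirchhoff_def s2.kirchhoff_def by (simp add: abs_le_iff algebra_simps)
qed

lemma y_0_diff_le: "y1 0 - y2 0 \<le> (1 + 2 * lam ^ 3 * g) * \<bar>c1 - c2\<bar>"
proof (cases "y1 0 \<le> y2 0")
  case True
  moreover have "0 \<le> (1 + 2 * lam ^ 3 * g) * \<bar>c1 - c2\<bar>" using s1.lam_pos s1.g_pos by simp
  ultimately show ?thesis by linarith
next
  case False
  define d where "d = \<bar>c1 - c2\<bar>"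
  have "continuous_on {0..lam} (\<lambda>t. y1 t - y2 t)"
    by (intro continuous_on_diff s1.continuous_on_y s2.continuous_on_y)
  then obtain T where T: "T \<in> {0..lam}" "y1 T - y2 T \<le> 0"
    and ordered: "\<And>s. 0 \<le> s \<Longrightarrow> s < T \<Longrightarrow> 0 < y1 s - y2 s"
    using first_nonpos_point[of 0 lam "\<lambda>t. y1 t - y2 t"] s1.lam_pos s1.y_lam s2.y_lam by auto
  have kirchhoff_mono: "s1.kirchhoff 0 - s2.kirchhoff 0 + 2 * lam\<^sup>2 * g * d * 0
          \<le> s1.kirchhoff T - s2.kirchhoff T + 2 * lam\<^sup>2 * g * d * T"
  proof (rule le_of_deriv_nonneg[where f = "\<lambda>x. s1.kirchhoff x - s2.kirchhoff x + 2 * lam\<^sup>2 * g * d * x"])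
    show "continuous_on {0..T} (\<lambda>x. s1.kirchhoff x - s2.kirchhoff x + 2 * lam\<^sup>2 * g * d * x)"
      using T continuous_on_subset[OF s1.continuous_on_kirchhoff] continuous_on_subset[OF s2.continuous_on_kirchhoff]
      by (intro continuous_intros) auto
    fix x assume x: "0 < x" "x < T"
    then have xi: "x \<in> {0<..<lam}" using T by auto
    show "((\<lambda>x. s1.kirchhoff x - s2.kirchhoff x + 2 * lam\<^sup>2 * g * d * x) has_real_derivative
        s1.flux x - s2.flux x + 2 * lam\<^sup>2 * g * d * 1) (at x)"
      by (rule DERIV_add[OF DERIV_diff[OF s1.kirchhoff_has_deriv[OF xi] s2.kirchhoff_has_deriv[OF xi]]
            DERIV_cmult[OF DERIV_ident]])
    have "y2 z \<le> y1 z" if "0 < z" "z < x" for z using ordered[of z] that x by simp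
    with False x xi have "- (2 * lam\<^sup>2 * g * d) \<le> s1.flux x - s2.flux x"
      unfolding d_def by (intro flux_diff_lower_bound) auto
    then show "0 \<le> s1.flux x - s2.flux x + 2 * lam\<^sup>2 * g * d * 1" by simp
  qed (use T in simp)
  have "2 * lam\<^sup>2 * g * d * T \<le> 2 * lam\<^sup>2 * g * d * lam"
    using T s1.g_pos by (intro mult_left_mono) (auto simp: d_def)
  then have "2 * lam\<^sup>2 * g * d * T \<le> 2 * lam ^ 3 * g * d"
    by (simp add: power3_eq_cube power2_eq_square mult.commute mult.left_commute)
  moreover have "s1.kirchhoff T - s2.kirchhoff T \<le> d / 2"
    using kirchhoff_diff_le T by (simp add: d_def)
  moreover have "y1 0 - y2 0 - d / 2 \<le> s1.kirchhoff 0 - s2.kirchhoff 0"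
    using kirchhoff_diff_ge[of 0] False s1.lam_pos by (simp add: d_def)
  ultimately show ?thesis using kirchhoff_mono unfolding d_def by (simp add: algebra_simps)
qed

lemma abs_y_0_diff_le: "\<bar>y1 0 - y2 0\<bar> \<le> (1 + 2 * lam ^ 3 * g) * \<bar>c1 - c2\<bar>"
proof -
  interpret swapped: bvp_solution_pair lam c2 c1 g y2 y2' y1 y1'
    by (intro bvp_solution_pair.intro s1.bvp_solution_axioms s2.bvp_solution_axioms)
  show ?thesis using y_0_diff_le swapped.y_0_diff_le by (simp add: abs_minus_commute)
qed

lemma abs_y'_diff_le:
  assumes "x \<in> {0<..<lam}"
  shows "\<bar>y1' x - y2' x\<bar> \<le> \<bar>s1.flux x - s2.flux x\<bar> + g * c1 * \<bar>y1 x - y2 x\<bar> + g * \<bar>c1 - c2\<bar>"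
proof -
  define A B where "A = 1 + c1 * y1 x" and "B = 1 + c2 * y2 x"
  have A: "1 \<le> A" and B: "1 \<le> B"
    using s1.one_le_diffusivity[of x] s2.one_le_diffusivity[of x] assms by (auto simp: A_def B_def)
  then have AB: "1 \<le> A * B" using mult_mono[of 1 A 1 B] by auto
  have flux2: "0 < s2.flux x" "s2.flux x \<le> g" using s2.flux_pos s2.flux_le assms by auto
  have "y1' x - y2' x = s1.flux x / A - s2.flux x / B"
    using s1.y'_eq[of x] s2.y'_eq[of x] assms by (simp add: A_def B_def)
  also have "\<dots> = (s1.flux x - s2.flux x) / A + s2.flux x * ((B - A) / (A * B))"
    using A B by (simp add: field_simps)
  finally have split: "y1' x - y2' x = (s1.flux x - s2.flux x) / A + s2.flux x * ((B - A) / (A * B))" .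
  have first: "\<bar>(s1.flux x - s2.flux x) / A\<bar> \<le> \<bar>s1.flux x - s2.flux x\<bar>"
    using A by (simp add: abs_div divide_le_self)
  have "\<bar>B - A\<bar> \<le> c1 * \<bar>y1 x - y2 x\<bar> + \<bar>c1 - c2\<bar>"
  proof -
    have "B - A = - (c1 * (y1 x - y2 x)) - (c1 - c2) * y2 x" by (simp add: A_def B_def algebra_simps)
    then have "\<bar>B - A\<bar> \<le> \<bar>c1 * (y1 x - y2 x)\<bar> + \<bar>(c1 - c2) * y2 x\<bar>"
      using abs_triangle_ineq4[of "- (c1 * (y1 x - y2 x))"] by simp
    moreover have "\<bar>(c1 - c2) * y2 x\<bar> \<le> \<bar>c1 - c2\<bar>"
      using s2.y_range[of x] assms by (simp add: abs_mult mult_left_le)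
    ultimately show ?thesis using s1.c_nonneg by (simp add: abs_mult)
  qed
  moreover have "\<bar>(B - A) / (A * B)\<bar> \<le> \<bar>B - A\<bar>"
    using AB by (simp add: abs_div abs_of_pos divide_le_self)
  ultimately have "\<bar>(B - A) / (A * B)\<bar> \<le> c1 * \<bar>y1 x - y2 x\<bar> + \<bar>c1 - c2\<bar>" by linarith
  then have "\<bar>s2.flux x * ((B - A) / (A * B))\<bar> \<le> g * (c1 * \<bar>y1 x - y2 x\<bar> + \<bar>c1 - c2\<bar>)"
    unfolding abs_mult using flux2 by (intro mult_mono) auto
  moreover have "g * (c1 * \<bar>y1 x - y2 x\<bar> + \<bar>c1 - c2\<bar>) = g * c1 * \<bar>y1 x - y2 x\<bar> + g * \<bar>c1 - c2\<bar>"
    by (simp add: algebra_simps)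
  ultimately show ?thesis
    unfolding split using first abs_triangle_ineq[of "(s1.flux x - s2.flux x) / A"] by linarith
qed

end

definition gronwall_rate :: "real \<Rightarrow> real \<Rightarrow> real \<Rightarrow> real" where
  "gronwall_rate lam g b = 1 + 2 * g * b + g + 4 * lam + 2 * lam * g * b + 2 * lam * g"

lemma gronwall_rate_nonneg: "0 \<le> lam \<Longrightarrow> 0 \<le> g \<Longrightarrow> 0 \<le> b \<Longrightarrow> 0 \<le> gronwall_rate lam g b"
  by (simp add: gronwall_rate_def)

lemma gronwall_rate_bound:
  fixes X Z e g b lam :: real
  assumes "0 \<le> X" "0 \<le> Z" "0 \<le> e" "0 \<le> g" "0 \<le> b" "0 \<le> lam"
  shows "2 * X * (Z + g * b * X + g * e) + 4 * lam * Z * (Z + g * b * X + g * e)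
           \<le> gronwall_rate lam g b * (X\<^sup>2 + Z\<^sup>2 + e\<^sup>2)"
proof -
  have amgm: "2 * p * q \<le> p\<^sup>2 + q\<^sup>2" for p q :: real
    using zero_le_power2[of "p - q"] unfolding power2_diff by linarith
  have "2 * X * (Z + g * b * X + g * e) + 4 * lam * Z * (Z + g * b * X + g * e)
      = 2 * X * Z + 2 * g * b * X\<^sup>2 + g * (2 * e * X) + 4 * lam * Z\<^sup>2
        + (2 * lam * g * b) * (2 * X * Z) + (2 * lam * g) * (2 * e * Z)"
    by (simp add: algebra_simps power2_eq_square)
  also have "\<dots> \<le> (X\<^sup>2 + Z\<^sup>2) + 2 * g * b * X\<^sup>2 + g * (e\<^sup>2 + X\<^sup>2) + 4 * lam * Z\<^sup>2
        + (2 * lam * g * b) * (X\<^sup>2 + Z\<^sup>2) + (2 * lam * g) * (e\<^sup>2 + Z\<^sup>2)"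
    using assms by (intro add_mono mult_left_mono amgm order_refl) auto
  also have "\<dots> = (1 + 2 * g * b + g + 2 * lam * g * b) * X\<^sup>2
        + (1 + 4 * lam + 2 * lam * g * b + 2 * lam * g) * Z\<^sup>2 + (g + 2 * lam * g) * e\<^sup>2"
    by (simp add: algebra_simps)
  also have "\<dots> \<le> gronwall_rate lam g b * X\<^sup>2 + gronwall_rate lam g b * Z\<^sup>2 + gronwall_rate lam g b * e\<^sup>2"
  proof -
    have "(1 + 2 * g * b + g + 2 * lam * g * b) * X\<^sup>2 \<le> gronwall_rate lam g b * X\<^sup>2"
      "(1 + 4 * lam + 2 * lam * g * b + 2 * lam * g) * Z\<^sup>2 \<le> gronwall_rate lam g b * Z\<^sup>2"
      "(g + 2 * lam * g) * e\<^sup>2 \<le> gronwall_rate lam g b * e\<^sup>2"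
      using assms unfolding gronwall_rate_def
      by (intro mult_right_mono; auto intro!: mult_nonneg_nonneg)+
    then show ?thesis by linarith
  qed
  finally show ?thesis by (simp add: algebra_simps)
qed

definition lipschitz_const :: "real \<Rightarrow> real \<Rightarrow> real \<Rightarrow> real" where
  "lipschitz_const lam g b =
     sqrt (((1 + g\<^sup>2) * (1 + 2 * lam ^ 3 * g)\<^sup>2 + 1) * exp (gronwall_rate lam g b * lam))"

lemma lipschitz_const_pos: "0 < lipschitz_const lam g b"
  unfolding lipschitz_const_def by (intro real_sqrt_gt_zero mult_pos_pos) (auto intro: add_nonneg_pos)

context bvp_solution_pair
begin

lemma energy_deriv_bound:
  assumes "c1 \<le> b" and x: "x \<in> {0<..<lam}"
  shows "2 * (y1 x - y2 x) * (y1' x - y2' x) + 2 * (s1.flux x - s2.flux x) * (- 2 * x * (y1' x - y2' x))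
           \<le> gronwall_rate lam g b * ((y1 x - y2 x)\<^sup>2 + (s1.flux x - s2.flux x)\<^sup>2 + (c1 - c2)\<^sup>2)"
proof -
  define X Z P where "X = \<bar>y1 x - y2 x\<bar>" and "Z = \<bar>s1.flux x - s2.flux x\<bar>" and "P = \<bar>y1' x - y2' x\<bar>"
  have "g * c1 * X \<le> g * b * X"
    using assms(1) s1.g_pos by (intro mult_right_mono mult_left_mono) (auto simp: X_def)
  then have "P \<le> Z + g * b * X + g * \<bar>c1 - c2\<bar>"
    using abs_y'_diff_le[OF x] unfolding X_def Z_def P_def by linarith
  moreover have "2 * (y1 x - y2 x) * (y1' x - y2' x) + 2 * (s1.flux x - s2.flux x) * (- 2 * x * (y1' x - y2' x))
                   \<le> 2 * X * P + 4 * lam * Z * P"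
  proof -
    have first: "(y1 x - y2 x) * (y1' x - y2' x) \<le> X * P"
      unfolding X_def P_def abs_mult[symmetric] by (rule abs_ge_self)
    have "- ((s1.flux x - s2.flux x) * (y1' x - y2' x)) \<le> Z * P"
      unfolding Z_def P_def abs_mult[symmetric] by (rule abs_ge_minus_self)
    then have "x * (- ((s1.flux x - s2.flux x) * (y1' x - y2' x))) \<le> x * (Z * P)"
      using x by (intro mult_left_mono) auto
    also have "\<dots> \<le> lam * (Z * P)"
      using x by (intro mult_right_mono) (auto simp: Z_def P_def)
    finally have "x * (- ((s1.flux x - s2.flux x) * (y1' x - y2' x))) \<le> lam * (Z * P)" .
    with first show ?thesis by (simp add: algebra_simps)
  qed
  moreover have "0 \<le> b" using s1.c_nonneg assms(1) by simp
  then have "2 * X * (Z + g * b * X + g * \<bar>c1 - c2\<bar>) + 4 * lam * Z * (Z + g * b * X + g * \<bar>c1 - c2\<bar>)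
               \<le> gronwall_rate lam g b * (X\<^sup>2 + Z\<^sup>2 + \<bar>c1 - c2\<bar>\<^sup>2)"
    using s1.g_pos s1.lam_pos by (intro gronwall_rate_bound) (auto simp: X_def Z_def)
  moreover have "2 * X * P + 4 * lam * Z * P
                   \<le> 2 * X * (Z + g * b * X + g * \<bar>c1 - c2\<bar>) + 4 * lam * Z * (Z + g * b * X + g * \<bar>c1 - c2\<bar>)"
    using calculation(1) s1.lam_pos by (intro add_mono mult_left_mono) (auto simp: X_def Z_def)
  ultimately show ?thesis unfolding X_def Z_def by simp
qed

lemma diff_sq_le:
  assumes "c1 \<le> b" "c2 \<le> b" and t: "0 \<le> t" "t < lam"
  shows "(y1 t - y2 t)\<^sup>2 \<le> ((1 + g\<^sup>2) * (y1 0 - y2 0)\<^sup>2 + (c1 - c2)\<^sup>2) * exp (gronwall_rate lam g b * lam)"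
proof -
  define M where "M = gronwall_rate lam g b"
  define E where "E x = (y1 x - y2 x)\<^sup>2 + (s1.flux x - s2.flux x)\<^sup>2 + (c1 - c2)\<^sup>2" for x
  have "E t \<le> E 0 * exp (M * (t - 0))"
  proof (rule gronwall_le_exp[OF t(1)])
    show "continuous_on {0..t} E" unfolding E_def
      using continuous_on_subset[OF s1.continuous_on_y, of "{0..t}"] continuous_on_subset[OF s2.continuous_on_y, of "{0..t}"]
        s1.continuous_on_flux[OF t(2)] s2.continuous_on_flux[OF t(2)] t
      by (intro continuous_intros) auto
    fix x assume "0 < x" "x < t"
    then have xi: "x \<in> {0<..<lam}" using t by auto
    show "(E has_real_derivative
        2 * (y1 x - y2 x) * (y1' x - y2' x) + 2 * (s1.flux x - s2.flux x) * (- 2 * x * (y1' x - y2' x))) (at x)"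
      unfolding E_def[abs_def]
      using s1.y_has_deriv[OF xi] s2.y_has_deriv[OF xi] s1.flux_has_deriv[OF xi] s2.flux_has_deriv[OF xi]
      by (auto intro!: derivative_eq_intros simp: algebra_simps)
    show "2 * (y1 x - y2 x) * (y1' x - y2' x) + 2 * (s1.flux x - s2.flux x) * (- 2 * x * (y1' x - y2' x)) \<le> M * E x"
      unfolding M_def E_def by (rule energy_deriv_bound[OF assms(1) xi])
  qed
  also have "\<dots> \<le> E 0 * exp (M * lam)"
  proof (rule mult_left_mono)
    have "0 \<le> M" unfolding M_def using s1.lam_pos s1.g_pos s1.c_nonneg assms(1)
      by (intro gronwall_rate_nonneg) auto
    then show "exp (M * (t - 0)) \<le> exp (M * lam)" using t by (simp add: mult_left_mono)
  qed (simp add: E_def)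
  also have "E 0 = (1 + g\<^sup>2) * (y1 0 - y2 0)\<^sup>2 + (c1 - c2)\<^sup>2"
    by (simp add: E_def s1.flux_0 s2.flux_0 power2_eq_square algebra_simps)
  finally have "E t \<le> ((1 + g\<^sup>2) * (y1 0 - y2 0)\<^sup>2 + (c1 - c2)\<^sup>2) * exp (M * lam)" .
  moreover have "(y1 t - y2 t)\<^sup>2 \<le> E t" by (simp add: E_def)
  ultimately show ?thesis unfolding M_def by linarith
qed

lemma abs_diff_le_lipschitz_const:
  assumes "c1 \<le> b" "c2 \<le> b" and x: "x \<in> {0..lam}"
  shows "\<bar>y1 x - y2 x\<bar> \<le> lipschitz_const lam g b * \<bar>c1 - c2\<bar>"
proof (cases "x = lam")
  case True
  then show ?thesis using s1.y_lam s2.y_lam lipschitz_const_pos[of lam g b] by simp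
next
  case False
  define K d E where "K = 1 + 2 * lam ^ 3 * g" and "d = \<bar>c1 - c2\<bar>"
    and "E = exp (gronwall_rate lam g b * lam)"
  have "0 \<le> K * d" using s1.lam_pos s1.g_pos by (simp add: K_def d_def)
  then have "(y1 0 - y2 0)\<^sup>2 \<le> (K * d)\<^sup>2"
    using abs_y_0_diff_le abs_le_square_iff[of "y1 0 - y2 0" "K * d"] by (simp add: K_def d_def)
  then have "(1 + g\<^sup>2) * (y1 0 - y2 0)\<^sup>2 + (c1 - c2)\<^sup>2 \<le> (1 + g\<^sup>2) * (K * d)\<^sup>2 + d\<^sup>2"
    by (simp add: d_def mult_left_mono)
  then have "((1 + g\<^sup>2) * (y1 0 - y2 0)\<^sup>2 + (c1 - c2)\<^sup>2) * E \<le> ((1 + g\<^sup>2) * (K * d)\<^sup>2 + d\<^sup>2) * E"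
    by (simp add: E_def mult_right_mono)
  moreover have "(y1 x - y2 x)\<^sup>2 \<le> ((1 + g\<^sup>2) * (y1 0 - y2 0)\<^sup>2 + (c1 - c2)\<^sup>2) * E"
    unfolding E_def using diff_sq_le[OF assms(1,2), of x] x False by simp
  ultimately have "(y1 x - y2 x)\<^sup>2 \<le> ((1 + g\<^sup>2) * K\<^sup>2 + 1) * E * d\<^sup>2"
    by (simp add: power_mult_distrib algebra_simps)
  also have "\<dots> = (lipschitz_const lam g b * d)\<^sup>2"
    unfolding lipschitz_const_def K_def E_def power_mult_distrib
    by (subst real_sqrt_pow2) (auto intro: add_nonneg_nonneg)
  finally show ?thesis
    using abs_le_square_iff[of "y1 x - y2 x" "lipschitz_const lam g b * d"] lipschitz_const_pos[of lam g b]
    by (simp add: d_def)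
qed

end

theorem theorem3p9:
  fixes lam \<gamma> b :: real and \<phi> :: "real \<Rightarrow> real \<Rightarrow> real"
  assumes "lam > 0" and "\<gamma> > 0"
    and phi: "\<And>c. c \<in> {0..<beta1 \<gamma>} \<Longrightarrow>
               \<phi> c \<in> Kset lam \<and> solves_bvp lam \<gamma> c (\<phi> c)
               \<and> (\<forall>h\<in>Kset lam. solves_bvp lam \<gamma> c h \<longrightarrow> (\<forall>x\<in>{0..lam}. h x = \<phi> c x))"
    and "0 < b" and "b < beta1 \<gamma>"
  shows "\<exists>L>0. \<forall>b1\<in>{0..b}. \<forall>b2\<in>{0..b}.
           (SUP x\<in>{0..lam}. \<bar>\<phi> b1 x - \<phi> b2 x\<bar>) \<le> L * \<bar>b1 - b2\<bar>"
proof (intro exI conjI ballI)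
  show "0 < lipschitz_const lam \<gamma> b" by (rule lipschitz_const_pos)
  have solution: "\<exists>y'. bvp_solution lam c \<gamma> (\<phi> c) y'" if "c \<in> {0..b}" for c
  proof -
    have "c \<in> {0..<beta1 \<gamma>}" using that \<open>b < beta1 \<gamma>\<close> by auto
    then have "\<phi> c \<in> Kset lam" "solves_bvp lam \<gamma> c (\<phi> c)" using phi by auto
    with that obtain y' where "bvp_solution lam c \<gamma> (\<phi> c) y'"
      using bvp_solutionI[OF assms(1,2)] by auto
    then show ?thesis by blast
  qed
  fix b1 b2 assume b1: "b1 \<in> {0..b}" and b2: "b2 \<in> {0..b}"
  then obtain y1' y2' where "bvp_solution lam b1 \<gamma> (\<phi> b1) y1'" "bvp_solution lam b2 \<gamma> (\<phi> b2) y2'"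
    using solution by blast
  then interpret bvp_solution_pair lam b1 b2 \<gamma> "\<phi> b1" y1' "\<phi> b2" y2'
    by (rule bvp_solution_pair.intro)
  show "(SUP x\<in>{0..lam}. \<bar>\<phi> b1 x - \<phi> b2 x\<bar>) \<le> lipschitz_const lam \<gamma> b * \<bar>b1 - b2\<bar>"
  proof (rule cSUP_least)
    show "{0..lam} \<noteq> {}" using \<open>lam > 0\<close> by simp
    show "\<bar>\<phi> b1 x - \<phi> b2 x\<bar> \<le> lipschitz_const lam \<gamma> b * \<bar>b1 - b2\<bar>" if "x \<in> {0..lam}" for x
      using abs_diff_le_lipschitz_const b1 b2 that by simp
  qed
qed

end
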